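(* Let $f,g\in\mathbb{Z}[t]$ be AC polynomials of degree $d$, with $a_j,b_j$ the coefficients of $t^j$ in $f,g$ respectively. Let $r>0$ and $\lambda$ be integers and suppose $\Lambda=f+\lambda t^{d+1}A_r+t^{d+r+1}g$ is an AC polynomial, with $|a_j|<|a_{j+1}|<|\lambda|$ and $|\lambda|>|b_j|>|b_{j+1}|$ for all $j$. Then for every integer $y$ with $1\le y\le r$, $\Lambda A_y$ is an AC polynomial with the same properties as $\Lambda$; namely $$\Lambda A_y=f_y+\lambda_y t^{d+y}A_{r-y+1}+t^{d+r+1}g_y,$$ where $f_y,g_y$ are AC polynomials of degree $d+y-1$ and $\lambda_y=-\epsilon_y\,y\,\lambda$. The absolute values of the coefficients of $f_y$ are monotonically increasing, those of $g_y$ monotonically decreasing, and all are less than $|\lambda_y|$. Furthermore, the coefficients of $f_y$ depend on the parity of $r$ but not on the actual value of $r$, and the coefficients of $g_y$ are independent of $r$.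
   Context: $\epsilon_x=(-1)^x$. For an integer $w$, $A_w=(t^w+\epsilon_{w-1})/(t+1)$; for $w>0$, $A_w=\sum_{j=0}^{w-1}\epsilon_jt^{w-1-j}$. For $f\in\mathbb{Z}[t]$ write $[f]_j$ for the coefficient of $t^j$. An AC (alternating coefficient) polynomial is a nonzero $f\in\mathbb{Z}[t]$ with $[f]_j[f]_{j+1}<0$ for all $j$ with $\min\deg f\le j<\deg f$ (where $\min\deg f$ is the lowest degree of a nonzero term). *)

theory Defs
  imports "HOL-Computational_Algebra.Polynomial"
begin

definition eps :: "nat \<Rightarrow> int" where
  "eps x = (-1) ^ x"

definition A :: "nat \<Rightarrow> int poly" where
  "A w = (\<Sum>j<w. monom (eps j) (w - 1 - j))"

definition min_deg :: "int poly \<Rightarrow> nat" where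
  "min_deg f = (LEAST j. coeff f j \<noteq> 0)"

definition AC :: "int poly \<Rightarrow> bool" where
  "AC f \<longleftrightarrow> f \<noteq> 0 \<and>
     (\<forall>j. min_deg f \<le> j \<and> j < degree f \<longrightarrow> coeff f j * coeff f (j + 1) < 0)"

definition Lam :: "int poly \<Rightarrow> int poly \<Rightarrow> nat \<Rightarrow> int \<Rightarrow> nat \<Rightarrow> int poly" where
  "Lam f g d lam r = f + monom lam (d + 1) * A r + monom 1 (d + r + 1) * g"

end

theory Submission
  imports Defs
begin

text \<open>
  Write the coefficients of the AC polynomial \<open>\<Lambda>\<close> as \<open>\<sigma> \<epsilon>\<^sub>k h\<^sub>k\<close> with a global sign
  \<open>\<sigma>\<close> and \<open>h\<^sub>k = |[\<Lambda>]\<^sub>k|\<close>: the \<open>h\<^sub>k\<close> increase through \<open>|a\<^sub>0|, \<dots>, |a\<^sub>d|\<close>, stay at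
  \<open>|\<lambda>|\<close> for \<open>d < k \<le> d + r\<close> and then decrease through \<open>|b\<^sub>0|, \<dots>, |b\<^sub>d|\<close>. Since
  \<open>[A\<^sub>y]\<^sub>i = \<epsilon>\<^bsub>y-1-i\<^esub>\<close>, the coefficient of \<open>t\<^sup>n\<close> in \<open>\<Lambda> A\<^sub>y\<close> is
  \<open>\<sigma> \<epsilon>\<^bsub>n+y+1\<^esub> W\<^sub>n\<close> with the window sum \<open>W\<^sub>n = h\<^bsub>n-y+1\<^esub> + \<dots> + h\<^sub>n\<close>.
  Sliding the window, \<open>W\<^sub>n\<close> strictly increases for \<open>n < d + y\<close>, equals \<open>y |\<lambda>|\<close> for
  \<open>d + y \<le> n \<le> d + r\<close> and strictly decreases afterwards. This gives the AC property, the
  block \<open>\<lambda>\<^sub>y t\<^bsup>d+y\<^esup> A\<^bsub>r-y+1\<^esub>\<close> and all bounds, and it forces \<open>f\<^sub>y\<close>, \<open>g\<^sub>y\<close> to be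
  the parts of \<open>\<Lambda> A\<^sub>y\<close> below \<open>t\<^bsup>d+y\<^esup>\<close> and from \<open>t\<^bsup>d+r+1\<^esup>\<close> on
  (\<open>low r\<close> and \<open>high r\<close> below). The windows below \<open>d + y\<close> only see \<open>f\<close> and the start of
  the plateau, those beyond \<open>d + r\<close>, shifted by \<open>r - y\<close>, only its end and \<open>g\<close>; what is left
  of \<open>r\<close> is the sign \<open>\<epsilon>\<^bsub>d+r\<^esub> = \<sigma> sgn \<lambda>\<close>, which the AC hypothesis fixes.
\<close>

lemma eps_add: "eps (m + n) = eps m * eps n"
  by (simp add: eps_def power_add)

lemma eps_Suc: "eps (Suc n) = - eps n"
  by (simp add: eps_def)

lemma eps_mult_self: "eps n * eps n = 1"
  by (simp add: eps_def flip: power_add)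

lemma abs_eps: "\<bar>eps n\<bar> = 1"
  by (simp add: eps_def)

lemma sgn_eps: "sgn (eps n) = eps n"
  by (cases "even n") (simp_all add: eps_def)

lemma eps_cong: "even m = even n \<Longrightarrow> eps m = eps n"
  by (simp add: eps_def minus_one_power_iff)

lemma coeff_A: "coeff (A w) m = (if m < w then eps (w - 1 - m) else 0)"
proof -
  have "coeff (A w) m = (\<Sum>j<w. if w - 1 - j = m then eps j else 0)"
    by (simp add: A_def coeff_sum coeff_monom)
  also have "\<dots> = (\<Sum>j<w. if j = w - 1 - m \<and> m < w then eps j else 0)"
    by (rule sum.cong) auto
  also have "\<dots> = (if m < w then eps (w - 1 - m) else 0)"
    by (cases "m < w") (auto simp: sum.delta)
  finally show ?thesis .
qed

lemma coeff_min_deg_nonzero: "p \<noteq> 0 \<Longrightarrow> coeff p (min_deg p) \<noteq> 0"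
  unfolding min_deg_def by (rule LeastI_ex) (meson leading_coeff_neq_0)

lemma coeff_below_min_deg: "k < min_deg p \<Longrightarrow> coeff p k = 0"
  unfolding min_deg_def using not_less_Least by blast

lemma AC_iff:
  "AC p \<longleftrightarrow> p \<noteq> 0 \<and> (\<forall>j<degree p. coeff p j \<noteq> 0 \<longrightarrow> coeff p j * coeff p (Suc j) < 0)"
proof
  assume "AC p"
  then show "p \<noteq> 0 \<and> (\<forall>j<degree p. coeff p j \<noteq> 0 \<longrightarrow> coeff p j * coeff p (Suc j) < 0)"
    unfolding AC_def using coeff_below_min_deg by (auto simp: not_le[symmetric])
next
  assume "p \<noteq> 0 \<and> (\<forall>j<degree p. coeff p j \<noteq> 0 \<longrightarrow> coeff p j * coeff p (Suc j) < 0)"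
  then have nz: "p \<noteq> 0"
    and step: "\<And>j. j < degree p \<Longrightarrow> coeff p j \<noteq> 0 \<Longrightarrow> coeff p j * coeff p (Suc j) < 0"
    by auto
  let ?m = "min_deg p"
  have nonzero: "coeff p (?m + k) \<noteq> 0" if "?m + k \<le> degree p" for k
    using that
  proof (induction k)
    case 0
    then show ?case using coeff_min_deg_nonzero[OF nz] by simp
  next
    case (Suc k)
    with step[of "?m + k"] show ?case by fastforce
  qed
  show "AC p"
    unfolding AC_def
  proof (intro conjI allI impI nz)
    fix j assume j: "?m \<le> j \<and> j < degree p"
    with nonzero[of "j - ?m"] have "coeff p j \<noteq> 0" by simp
    with j step show "coeff p j * coeff p (j + 1) < 0" by simp
  qed
qed

lemma AC_imp_alternating:
  assumes "AC p"
  obtains s where "\<bar>s\<bar> = 1" "\<And>k. coeff p k = s * eps k * \<bar>coeff p k\<bar>"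
proof -
  let ?m = "min_deg p"
  from assms have nz: "p \<noteq> 0"
    and alt: "\<And>j. ?m \<le> j \<Longrightarrow> j < degree p \<Longrightarrow> coeff p j * coeff p (Suc j) < 0"
    unfolding AC_def by auto
  define s where "s = sgn (coeff p ?m) * eps ?m"
  have sign: "sgn (coeff p (?m + k)) = s * eps (?m + k)" if "?m + k \<le> degree p" for k
    using that
  proof (induction k)
    case 0
    then show ?case by (simp add: s_def mult.assoc eps_mult_self)
  next
    case (Suc k)
    then have "coeff p (?m + k) * coeff p (Suc (?m + k)) < 0"
      by (intro alt) simp_all
    then have "sgn (coeff p (Suc (?m + k))) = - sgn (coeff p (?m + k))"
      by (auto simp: mult_less_0_iff)
    with Suc show ?case by (simp add: eps_Suc)
  qed
  have "\<bar>s\<bar> = 1"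
    using coeff_min_deg_nonzero[OF nz] by (simp add: s_def abs_mult abs_eps abs_sgn_eq)
  moreover have "coeff p k = s * eps k * \<bar>coeff p k\<bar>" for k
  proof (cases "?m \<le> k \<and> k \<le> degree p")
    case True
    with sign[of "k - ?m"] have "sgn (coeff p k) = s * eps k" by simp
    then show ?thesis by (metis sgn_mult_abs)
  next
    case False
    then have "coeff p k = 0" using coeff_below_min_deg coeff_eq_0 by (meson not_le)
    then show ?thesis by simp
  qed
  ultimately show thesis by (rule that)
qed

lemma AC_poly_cutoff:
  assumes "AC p" and nz: "poly_cutoff k p \<noteq> 0"
  shows "AC (poly_cutoff k p)"
proof -
  let ?q = "poly_cutoff k p"
  have "coeff ?q (degree ?q) \<noteq> 0" using nz by simp
  then have "degree ?q < k" "degree ?q \<le> degree p"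
    by (auto simp: coeff_poly_cutoff split: if_splits intro: le_degree)
  with assms show ?thesis by (auto simp: AC_iff coeff_poly_cutoff)
qed

lemma AC_poly_shift:
  assumes "AC p" and nz: "poly_shift k p \<noteq> 0"
  shows "AC (poly_shift k p)"
proof -
  let ?q = "poly_shift k p"
  have "coeff p (degree ?q + k) \<noteq> 0" using nz by (simp flip: coeff_poly_shift)
  then have "degree ?q + k \<le> degree p" by (rule le_degree)
  with assms show ?thesis by (auto simp: AC_iff coeff_poly_shift)
qed

definition window_sum :: "nat \<Rightarrow> (nat \<Rightarrow> 'a::comm_monoid_add) \<Rightarrow> nat \<Rightarrow> 'a" where
  "window_sum y h n = (\<Sum>i = n + 1 - y..n. h i)"

lemma coeff_mult_A:
  assumes "\<And>i. coeff p i = s * eps i * h i"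
  shows "coeff (p * A y) n = s * eps (n + y + 1) * window_sum y h n"
proof -
  have "coeff (p * A y) n = (\<Sum>i\<le>n. coeff p i * coeff (A y) (n - i))"
    by (rule coeff_mult)
  also have "\<dots> = (\<Sum>i\<le>n. if i \<in> {n + 1 - y..n} then s * eps (n + y + 1) * h i else 0)"
  proof (rule sum.cong[OF refl])
    fix i assume i: "i \<in> {..n}"
    show "coeff p i * coeff (A y) (n - i)
      = (if i \<in> {n + 1 - y..n} then s * eps (n + y + 1) * h i else 0)"
    proof (cases "n - i < y")
      case True
      with i have "eps i * eps (y - 1 - (n - i)) = eps (n + y + 1)"
        unfolding eps_add[symmetric] by (intro eps_cong) auto
      with True i show ?thesis by (simp add: assms coeff_A algebra_simps)
    next
      case False
      with i show ?thesis by (simp add: coeff_A)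
    qed
  qed
  also have "\<dots> = (\<Sum>i\<in>{..n} \<inter> {n + 1 - y..n}. s * eps (n + y + 1) * h i)"
    by (rule sum.inter_restrict[symmetric]) simp
  also have "{..n} \<inter> {n + 1 - y..n} = {n + 1 - y..n}"
    by auto
  finally show ?thesis by (simp add: window_sum_def sum_distrib_left)
qed

lemma window_sum_Suc:
  fixes h :: "nat \<Rightarrow> 'a::ab_group_add"
  shows "window_sum y h (Suc n)
    = window_sum y h n + h (Suc n) - (if y \<le> Suc n then h (Suc n - y) else 0)"
proof (cases "y \<le> Suc n")
  case False
  then show ?thesis by (simp add: window_sum_def)
next
  case True
  define a where "a = Suc n - y"
  have "a \<le> Suc n"
    by (simp add: a_def)
  have "window_sum y h (Suc n) = sum h {Suc a..Suc n}" "window_sum y h n = sum h {a..n}"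
    using True by (simp_all add: window_sum_def a_def Suc_diff_le)
  moreover have "sum h {a..Suc n} = h a + sum h {Suc a..Suc n}"
    using \<open>a \<le> Suc n\<close> by (rule sum.atLeast_Suc_atMost)
  moreover have "sum h {a..Suc n} = sum h {a..n} + h (Suc n)"
    using \<open>a \<le> Suc n\<close> by simp
  ultimately show ?thesis using True by (simp add: a_def[symmetric] algebra_simps)
qed

lemma window_sum_cong:
  "(\<And>i. n + 1 - y \<le> i \<Longrightarrow> i \<le> n \<Longrightarrow> h i = h' i) \<Longrightarrow> window_sum y h n = window_sum y h' n"
  unfolding window_sum_def by (rule sum.cong) auto

lemma window_sum_shift:
  "y \<le> n + 1 \<Longrightarrow> window_sum y h (n + k) = window_sum y (\<lambda>i. h (i + k)) n"
  unfolding window_sum_def using sum.shift_bounds_cl_nat_ivl[of h "n + 1 - y" k n]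
  by (simp add: algebra_simps)

lemma window_sum_const:
  "y \<le> n + 1 \<Longrightarrow> (\<And>i. n + 1 - y \<le> i \<Longrightarrow> i \<le> n \<Longrightarrow> h i = c) \<Longrightarrow> window_sum y h n = of_nat y * c"
  by (simp add: window_sum_cong[of n y h "\<lambda>_. c"]) (simp add: window_sum_def)

lemma window_sum_nonneg:
  fixes h :: "nat \<Rightarrow> 'a::ordered_comm_monoid_add"
  shows "(\<And>i. 0 \<le> h i) \<Longrightarrow> 0 \<le> window_sum y h n"
  unfolding window_sum_def by (rule sum_nonneg)

lemma window_sum_pos:
  fixes h :: "nat \<Rightarrow> 'a::linordered_idom"
  assumes "\<And>i. 0 \<le> h i" "n + 1 - y \<le> i" "i \<le> n" "0 < h i"
  shows "0 < window_sum y h n"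
proof -
  have "h i \<le> window_sum y h n"
    unfolding window_sum_def by (rule member_le_sum) (use assms in auto)
  with assms(4) show ?thesis by simp
qed

lemma window_sum_less:
  fixes h :: "nat \<Rightarrow> 'a::linordered_idom"
  assumes "0 \<le> c" "\<And>i. h i \<le> c" "n + 1 - y \<le> i" "i \<le> n" "h i < c"
  shows "window_sum y h n < of_nat y * c"
proof -
  have "window_sum y h n < (\<Sum>i = n + 1 - y..n. c)"
    unfolding window_sum_def by (rule sum_strict_mono_ex1) (use assms in auto)
  also have "\<dots> = of_nat (card {n + 1 - y..n}) * c"
    by simp
  also have "\<dots> \<le> of_nat y * c"
  proof -
    have "card {n + 1 - y..n} \<le> y"
      by simp
    with assms(1) show ?thesis
      by (meson mult_right_mono of_nat_le_iff)
  qed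
  finally show ?thesis .
qed

lemma eq_cutoff_block_shift_iff:
  assumes "degree q < k" "k + m = l"
  shows "p = q + monom c k * A m + monom 1 l * q' \<longleftrightarrow>
    q = poly_cutoff k p \<and> q' = poly_shift l p \<and> (\<forall>i<m. coeff p (k + i) = c * eps (m - 1 - i))"
    (is "p = ?rhs \<longleftrightarrow> ?split")
proof -
  have q0: "coeff q n = 0" if "k \<le> n" for n
    using assms(1) that by (simp add: coeff_eq_0)
  have coeff_rhs: "coeff ?rhs n = coeff q n + (if n < k then 0 else c * coeff (A m) (n - k))
      + (if n < l then 0 else coeff q' (n - l))" for n
    by (simp add: coeff_monom_mult)
  show ?thesis
  proof
    assume "p = ?rhs"
    then have coeff_p: "coeff p n = coeff q n + (if n < k then 0 else c * coeff (A m) (n - k))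
      + (if n < l then 0 else coeff q' (n - l))" for n
      using coeff_rhs by simp
    then show ?split
      using assms(2)
      by (auto simp: poly_eq_iff coeff_p coeff_poly_cutoff coeff_poly_shift coeff_A q0)
  next
    assume ?split
    then have q: "q = poly_cutoff k p" and q': "q' = poly_shift l p"
      and block: "\<And>i. i < m \<Longrightarrow> coeff p (k + i) = c * eps (m - 1 - i)" by auto
    show "p = ?rhs"
    proof (rule poly_eqI)
      fix n
      consider "n < k" | "k \<le> n" "n < l" | "l \<le> n" by linarith
      then show "coeff p n = coeff ?rhs n"
      proof cases
        case 2
        with block[of "n - k"] assms(2) show ?thesis
          by (simp add: coeff_monom_mult q coeff_poly_cutoff coeff_A)
      qed (use assms(2) in
          \<open>auto simp: coeff_monom_mult q q' coeff_poly_cutoff coeff_poly_shift coeff_A\<close>)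
    qed
  qed
qed

locale AC_sandwich =
  fixes f g :: "int poly" and d y :: nat and lam :: int
  assumes f_AC: "AC f" and g_AC: "AC g"
    and f_deg: "degree f = d" and g_deg: "degree g = d"
    and f_mono: "\<forall>j<d. \<bar>coeff f j\<bar> < \<bar>coeff f (j + 1)\<bar>"
    and f_bound: "\<forall>j\<le>d. \<bar>coeff f j\<bar> < \<bar>lam\<bar>"
    and g_mono: "\<forall>j<d. \<bar>coeff g j\<bar> > \<bar>coeff g (j + 1)\<bar>"
    and g_bound: "\<forall>j\<le>d. \<bar>coeff g j\<bar> < \<bar>lam\<bar>"
    and y_pos: "1 \<le> y"
begin

definition sigma :: int where
  "sigma = sgn (coeff f d) * eps d"

definition mag :: "nat \<Rightarrow> nat \<Rightarrow> int" where
  "mag r k = \<bar>coeff (Lam f g d lam r) k\<bar>"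

definition W :: "nat \<Rightarrow> nat \<Rightarrow> int" where
  "W r = window_sum y (mag r)"

definition low :: "nat \<Rightarrow> int poly" where
  "low r = poly_cutoff (d + y) (Lam f g d lam r * A y)"

definition high :: "nat \<Rightarrow> int poly" where
  "high r = poly_shift (d + r + 1) (Lam f g d lam r * A y)"

lemma coeff_Lam:
  "coeff (Lam f g d lam r) k =
    (if k \<le> d then coeff f k
     else if k \<le> d + r then lam * eps (d + r - k)
     else coeff g (k - d - r - 1))"
proof -
  have "coeff f k = 0" if "d < k"
    using that f_deg by (simp add: coeff_eq_0)
  moreover have "r - Suc (k - Suc d) = d + r - k" if "d < k"
    using that by simp
  ultimately show ?thesis
    by (auto simp: Lam_def coeff_monom_mult coeff_A)
qed

lemma mag_eq:
  "mag r k =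
    (if k \<le> d then \<bar>coeff f k\<bar> else if k \<le> d + r then \<bar>lam\<bar> else \<bar>coeff g (k - d - r - 1)\<bar>)"
  by (simp add: mag_def coeff_Lam abs_mult abs_eps)

lemma coeff_f_d_nonzero: "coeff f d \<noteq> 0"
  using f_AC f_deg by (auto simp: AC_def)

lemma sigma_mult_self: "sigma * sigma = 1"
proof -
  have "sigma * sigma = sgn (coeff f d) * sgn (coeff f d) * (eps d * eps d)"
    by (simp add: sigma_def algebra_simps)
  then show ?thesis
    using coeff_f_d_nonzero by (simp add: eps_mult_self sgn_if)
qed

lemma abs_lam_pos: "0 < \<bar>lam\<bar>"
  using f_bound by (meson abs_ge_zero le_less_trans order_refl)

lemma abs_coeff_f_less: "i < j \<Longrightarrow> j \<le> d \<Longrightarrow> \<bar>coeff f i\<bar> < \<bar>coeff f j\<bar>"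
  by (rule lift_Suc_mono_less_ivl[where f = "\<lambda>j. \<bar>coeff f j\<bar>" and N = "{..<d}"])
    (use f_mono in auto)

lemma abs_coeff_g_less:
  assumes "i < j" "j \<le> d"
  shows "\<bar>coeff g j\<bar> < \<bar>coeff g i\<bar>"
proof -
  have "- \<bar>coeff g i\<bar> < - \<bar>coeff g j\<bar>"
    by (rule lift_Suc_mono_less_ivl[where f = "\<lambda>j. - \<bar>coeff g j\<bar>" and N = "{..<d}"])
      (use g_mono assms in auto)
  then show ?thesis by simp
qed

lemma coeff_g_nonzero: "j \<le> d \<Longrightarrow> coeff g j \<noteq> 0"
  using g_AC g_deg abs_coeff_g_less[of j d] by (cases "j = d") (auto simp: AC_def)

lemma abs_coeff_g_less_abs_lam: "\<bar>coeff g k\<bar> < \<bar>lam\<bar>"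
  using g_bound abs_lam_pos g_deg by (cases "k \<le> d") (auto simp: coeff_eq_0)

lemma mag_le: "mag r k \<le> \<bar>lam\<bar>"
  using f_bound abs_coeff_g_less_abs_lam by (auto simp: mag_eq less_imp_le)

lemma mag_less_abs_lam: "k \<le> d \<or> d + r < k \<Longrightarrow> mag r k < \<bar>lam\<bar>"
  using f_bound abs_coeff_g_less_abs_lam by (auto simp: mag_eq)

lemma mag_pos: "k \<le> 2 * d + r + 1 \<Longrightarrow> 0 < k \<or> k = d \<Longrightarrow> 0 < mag r k"
proof -
  assume k: "k \<le> 2 * d + r + 1" "0 < k \<or> k = d"
  have "coeff f k \<noteq> 0" if "k \<le> d"
    using that k(2) coeff_f_d_nonzero abs_coeff_f_less[of 0 k] by (cases "k = d") auto
  with k show ?thesis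
    using abs_lam_pos coeff_g_nonzero[of "k - d - r - 1"] by (auto simp: mag_eq)
qed

lemma mag_eq_0: "2 * d + r + 1 < k \<Longrightarrow> mag r k = 0"
  using g_deg by (simp add: mag_eq coeff_eq_0)

lemma mag_nonneg: "0 \<le> mag r k"
  by (simp add: mag_def)

lemma W_nonneg: "0 \<le> W r n"
  unfolding W_def by (rule window_sum_nonneg) (rule mag_nonneg)

lemma W_pos:
  assumes "n \<le> 2 * d + r + y" "0 < n \<or> d + y \<le> n + 1"
  shows "0 < W r n"
proof -
  let ?i = "min n (2 * d + r + 1)"
  have "0 < mag r ?i"
    using assms y_pos by (intro mag_pos) auto
  with assms y_pos show ?thesis
    unfolding W_def by (intro window_sum_pos[where i = ?i] mag_nonneg) auto
qed

lemma W_eq_0: "2 * d + r + y < n \<Longrightarrow> W r n = 0"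
  unfolding W_def window_sum_def by (rule sum.neutral) (auto intro!: mag_eq_0)

lemma W_plateau: "d + y \<le> n \<Longrightarrow> n \<le> d + r \<Longrightarrow> W r n = int y * \<bar>lam\<bar>"
  unfolding W_def by (rule window_sum_const) (auto simp: mag_eq)

lemma W_less: "n < d + y \<or> d + r < n \<Longrightarrow> W r n < int y * \<bar>lam\<bar>"
  unfolding W_def
  by (rule window_sum_less[of _ _ _ _ "if n < d + y then n + 1 - y else n"])
    (use y_pos in \<open>auto intro: mag_le mag_less_abs_lam\<close>)

lemma W_Suc:
  "W r (Suc n) = W r n + mag r (Suc n) - (if y \<le> Suc n then mag r (Suc n - y) else 0)"
  unfolding W_def by (rule window_sum_Suc)

lemma W_strict_mono_low:
  assumes "y \<le> r" "Suc n < d + y"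
  shows "W r n < W r (Suc n)"
proof -
  have "(if y \<le> Suc n then mag r (Suc n - y) else 0) < mag r (Suc n)"
  proof (cases "y \<le> Suc n")
    case True
    show ?thesis
    proof (cases "Suc n \<le> d")
      case True
      have "\<bar>coeff f (Suc n - y)\<bar> < \<bar>coeff f (Suc n)\<bar>"
        by (rule abs_coeff_f_less) (use True y_pos in auto)
      moreover have "Suc n - y \<le> d"
        using True by simp
      ultimately show ?thesis
        using True \<open>y \<le> Suc n\<close> by (simp add: mag_eq)
    next
      case False
      moreover have "Suc n - y \<le> d"
        using assms by simp
      ultimately show ?thesis
        using assms \<open>y \<le> Suc n\<close> mag_less_abs_lam[of "Suc n - y" r] by (simp add: mag_eq)
    qed
  next
    case False
    with assms mag_pos[of "Suc n" r] show ?thesis by simp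
  qed
  then show ?thesis by (simp add: W_Suc)
qed

lemma W_strict_antimono_high:
  assumes "y \<le> r" "d + r < n" "n < 2 * d + r + y"
  shows "W r (Suc n) < W r n"
proof -
  have "mag r (Suc n) < mag r (Suc n - y)"
  proof (cases "Suc n - y \<le> d + r")
    case True
    moreover have "d < Suc n - y"
      using assms by simp
    ultimately show ?thesis
      using assms mag_less_abs_lam[of "Suc n" r] by (simp add: mag_eq)
  next
    case False
    define j where "j = Suc n - d - r - 1"
    have "j - y \<le> d" "j - y < j" "Suc n - y - d - r - 1 = j - y"
      using assms y_pos False by (auto simp: j_def)
    moreover have "\<bar>coeff g j\<bar> < \<bar>coeff g (j - y)\<bar>"
      using g_deg abs_coeff_g_less coeff_g_nonzero calculation
      by (cases "j \<le> d") (auto simp: coeff_eq_0)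
    ultimately show ?thesis
      using assms False by (simp add: mag_eq j_def)
  qed
  with assms show ?thesis by (simp add: W_Suc)
qed

lemma W_eq_low: "y \<le> r \<Longrightarrow> y \<le> r' \<Longrightarrow> n < d + y \<Longrightarrow> W r n = W r' n"
  unfolding W_def by (rule window_sum_cong) (simp add: mag_eq)

lemma W_eq_high: "y \<le> r \<Longrightarrow> W r (d + r + 1 + m) = W y (d + y + 1 + m)"
proof -
  assume "y \<le> r"
  then have shift: "d + r + 1 + m = (d + y + 1 + m) + (r - y)"
    by simp
  have "W r (d + r + 1 + m) = window_sum y (\<lambda>i. mag r (i + (r - y))) (d + y + 1 + m)"
    unfolding shift W_def by (rule window_sum_shift) simp
  also have "\<dots> = W y (d + y + 1 + m)"
    unfolding W_def by (rule window_sum_cong) (use \<open>y \<le> r\<close> in \<open>auto simp: mag_eq add.commute\<close>)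
  finally show ?thesis .
qed

context
  fixes r :: nat
  assumes r_pos: "0 < r" and Lam_AC: "AC (Lam f g d lam r)"
begin

lemma coeff_Lam_sign: "coeff (Lam f g d lam r) k = sigma * eps k * mag r k"
proof -
  obtain s where s: "\<bar>s\<bar> = 1" and coeff_s: "\<And>k. coeff (Lam f g d lam r) k = s * eps k * mag r k"
    using AC_imp_alternating[OF Lam_AC] unfolding mag_def by metis
  have "coeff f d * eps d = s * (eps d * eps d) * \<bar>coeff f d\<bar>"
    using coeff_s[of d] by (simp add: coeff_Lam mag_eq algebra_simps)
  then have "sgn (coeff f d * eps d) = sgn (s * \<bar>coeff f d\<bar>)"
    by (simp add: eps_mult_self)
  then have "sgn (coeff f d) * sgn (eps d) = sgn s"
    using coeff_f_d_nonzero by (simp add: sgn_mult)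
  moreover have "sgn s = s"
    using s by (auto simp: sgn_if abs_if split: if_splits)
  ultimately have "s = sigma"
    by (simp add: sigma_def sgn_eps)
  with coeff_s show ?thesis by simp
qed

lemma lam_sign: "lam = sigma * eps (d + r) * \<bar>lam\<bar>"
proof -
  have h: "lam * eps (r - 1) = sigma * eps (d + 1) * \<bar>lam\<bar>"
    using coeff_Lam_sign[of "d + 1"] r_pos by (simp add: coeff_Lam mag_eq)
  have "lam = lam * eps (r - 1) * eps (r - 1)"
    by (simp add: mult.assoc eps_mult_self)
  also have "\<dots> = sigma * (eps (d + 1) * eps (r - 1)) * \<bar>lam\<bar>"
    unfolding h by (simp add: algebra_simps)
  also have "\<dots> = sigma * eps (d + r) * \<bar>lam\<bar>"
    using r_pos by (simp flip: eps_add)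
  finally show ?thesis .
qed

lemma coeff_Lam_mult_A: "coeff (Lam f g d lam r * A y) n = sigma * eps (n + y + 1) * W r n"
  unfolding W_def by (rule coeff_mult_A) (rule coeff_Lam_sign)

lemma abs_coeff_Lam_mult_A: "\<bar>coeff (Lam f g d lam r * A y) n\<bar> = W r n"
  using coeff_f_d_nonzero W_nonneg[of r n]
  by (simp add: coeff_Lam_mult_A abs_mult abs_eps sigma_def abs_sgn_eq)

end

lemma eps_eq_if_Lam_AC:
  assumes "0 < r" "AC (Lam f g d lam r)" "0 < r'" "AC (Lam f g d lam r')"
  shows "eps r = eps r'"
proof -
  have "sigma * eps (d + r) * \<bar>lam\<bar> = sigma * eps (d + r') * \<bar>lam\<bar>"
    using lam_sign[OF assms(1,2)] lam_sign[OF assms(3,4)] by simp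
  then show ?thesis
    using abs_lam_pos coeff_f_d_nonzero abs_eps[of d] by (auto simp: sigma_def eps_add sgn_eq_0_iff)
qed

context
  fixes r :: nat
  assumes r_pos: "0 < r" and y_le_r: "y \<le> r" and Lam_AC: "AC (Lam f g d lam r)"
begin

lemma abs_coeff_low: "\<bar>coeff (low r) n\<bar> = (if n < d + y then W r n else 0)"
  by (simp add: low_def coeff_poly_cutoff abs_coeff_Lam_mult_A[OF r_pos Lam_AC])

lemma abs_coeff_high: "\<bar>coeff (high r) n\<bar> = W r (n + (d + r + 1))"
  by (simp add: high_def coeff_poly_shift abs_coeff_Lam_mult_A[OF r_pos Lam_AC])

lemma coeff_low_top_nonzero: "coeff (low r) (d + y - 1) \<noteq> 0"
proof -
  have "0 < W r (d + y - 1)"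
    by (rule W_pos) (use y_pos in auto)
  then show ?thesis
    using abs_coeff_low[of "d + y - 1"] y_pos by auto
qed

lemma coeff_high_top_nonzero: "coeff (high r) (d + y - 1) \<noteq> 0"
proof -
  have "0 < W r (d + y - 1 + (d + r + 1))"
    by (rule W_pos) (use y_pos in auto)
  then show ?thesis
    using abs_coeff_high[of "d + y - 1"] by auto
qed

lemma degree_low: "degree (low r) = d + y - 1"
proof (rule antisym)
  show "degree (low r) \<le> d + y - 1"
    by (rule degree_le) (use y_pos in \<open>auto simp: low_def coeff_poly_cutoff\<close>)
qed (rule le_degree, rule coeff_low_top_nonzero)

lemma degree_high: "degree (high r) = d + y - 1"
proof (rule antisym)
  show "degree (high r) \<le> d + y - 1"
  proof (rule degree_le, intro allI impI)
    fix i assume "d + y - 1 < i"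
    then have "W r (i + (d + r + 1)) = 0"
      by (intro W_eq_0) auto
    with abs_coeff_high[of i] show "coeff (high r) i = 0"
      by simp
  qed
qed (rule le_degree, rule coeff_high_top_nonzero)

lemma AC_Lam_mult_A: "AC (Lam f g d lam r * A y)"
  unfolding AC_iff
proof (intro conjI allI impI)
  let ?P = "Lam f g d lam r * A y"
  have abs_P: "\<bar>coeff ?P n\<bar> = W r n" for n
    by (rule abs_coeff_Lam_mult_A[OF r_pos Lam_AC])
  have deg: "degree ?P \<le> 2 * d + r + y"
  proof (rule degree_le, intro allI impI)
    fix i assume "2 * d + r + y < i"
    with abs_P[of i] W_eq_0[of r i] show "coeff ?P i = 0"
      by simp
  qed
  have "0 < W r 1"
    by (rule W_pos) (use y_pos in auto)
  then have "coeff ?P 1 \<noteq> 0"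
    using abs_P[of 1] by auto
  then show "?P \<noteq> 0"
    by auto
  fix j assume j: "j < degree ?P" "coeff ?P j \<noteq> 0"
  have "0 < W r j"
    using j(2) abs_P[of j] W_nonneg[of r j] by auto
  moreover have "0 < W r (Suc j)"
    using j(1) deg by (intro W_pos) auto
  moreover have "coeff ?P j * coeff ?P (Suc j)
      = - (sigma * sigma) * (eps (j + y + 1) * eps (j + y + 1)) * (W r j * W r (Suc j))"
    unfolding coeff_Lam_mult_A[OF r_pos Lam_AC] by (simp add: eps_Suc algebra_simps)
  ultimately show "coeff ?P j * coeff ?P (Suc j) < 0"
    by (simp add: sigma_mult_self eps_mult_self)
qed

lemma AC_low: "AC (low r)"
  unfolding low_def
  by (rule AC_poly_cutoff[OF AC_Lam_mult_A]) (use coeff_low_top_nonzero in \<open>auto simp: low_def\<close>)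

lemma AC_high: "AC (high r)"
  unfolding high_def
  by (rule AC_poly_shift[OF AC_Lam_mult_A]) (use coeff_high_top_nonzero in \<open>auto simp: high_def\<close>)

lemma abs_coeff_low_strict_mono:
  assumes "j < d + y - 1"
  shows "\<bar>coeff (low r) j\<bar> < \<bar>coeff (low r) (j + 1)\<bar>"
proof -
  have "j + 1 < d + y"
    using assms by simp
  with W_strict_mono_low[OF y_le_r, of j] show ?thesis
    by (simp add: abs_coeff_low)
qed

lemma abs_coeff_high_strict_antimono:
  "j < d + y - 1 \<Longrightarrow> \<bar>coeff (high r) (j + 1)\<bar> < \<bar>coeff (high r) j\<bar>"
  using W_strict_antimono_high[OF y_le_r, of "j + (d + r + 1)"] by (simp add: abs_coeff_high)

lemma abs_coeff_low_less: "\<bar>coeff (low r) j\<bar> < int y * \<bar>lam\<bar>"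
  using W_less[of j r] abs_lam_pos y_pos by (simp add: abs_coeff_low)

lemma abs_coeff_high_less: "\<bar>coeff (high r) j\<bar> < int y * \<bar>lam\<bar>"
  using W_less[of "j + (d + r + 1)" r] by (simp add: abs_coeff_high)

lemma coeff_low: "coeff (low r) n = (if n < d + y then sigma * eps (n + y + 1) * W y n else 0)"
  using W_eq_low[OF y_le_r order_refl, of n]
  by (simp add: low_def coeff_poly_cutoff coeff_Lam_mult_A[OF r_pos Lam_AC])

lemma coeff_high: "coeff (high r) m = sigma * eps r * eps (m + d + y) * W y (d + y + 1 + m)"
proof -
  have "eps (m + (d + r + 1) + y + 1) = eps (r + (m + d + y))"
    by (rule eps_cong) presburger
  then have "eps (m + (d + r + 1) + y + 1) = eps r * eps (m + d + y)"
    by (simp add: eps_add)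
  then show ?thesis
    using W_eq_high[OF y_le_r, of m]
    by (simp add: high_def coeff_poly_shift coeff_Lam_mult_A[OF r_pos Lam_AC]
        add.commute add.left_commute)
qed

lemma Lam_mult_A_decomposition:
  "Lam f g d lam r * A y
    = low r + monom (- eps y * int y * lam) (d + y) * A (r - y + 1) + monom 1 (d + r + 1) * high r"
proof -
  let ?P = "Lam f g d lam r * A y" and ?c = "- eps y * int y * lam"
  have block: "coeff ?P (d + y + i) = ?c * eps (r - y + 1 - 1 - i)" if i: "i < r - y + 1" for i
  proof -
    define k where "k = r - y - i"
    have k: "r = y + i + k"
      using i y_le_r by (simp add: k_def)
    have parity: "eps (d + y + i + y + 1) = - eps y * eps (d + r) * eps (r - y + 1 - 1 - i)"
      by (simp add: k eps_add eps_Suc eps_mult_self algebra_simps)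
    have "W r (d + y + i) = int y * \<bar>lam\<bar>"
      using i y_le_r by (intro W_plateau) auto
    then have "coeff ?P (d + y + i) = sigma * eps (d + y + i + y + 1) * (int y * \<bar>lam\<bar>)"
      by (simp add: coeff_Lam_mult_A[OF r_pos Lam_AC])
    also have "\<dots> = - eps y * int y * (sigma * eps (d + r) * \<bar>lam\<bar>) * eps (r - y + 1 - 1 - i)"
      unfolding parity by (simp add: algebra_simps)
    also have "\<dots> = ?c * eps (r - y + 1 - 1 - i)"
      unfolding lam_sign[OF r_pos Lam_AC, symmetric] ..
    finally show ?thesis .
  qed
  have "degree (low r) < d + y"
    using degree_low y_pos by simp
  moreover have "d + y + (r - y + 1) = d + r + 1"
    using y_le_r by simp
  ultimately show ?thesis
    using block by (simp add: eq_cutoff_block_shift_iff low_def high_def)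
qed

end

lemma low_eq_if_Lam_AC:
  assumes "0 < r" "y \<le> r" "AC (Lam f g d lam r)" "0 < r'" "y \<le> r'" "AC (Lam f g d lam r')"
  shows "low r' = low r"
  using coeff_low[OF assms(1-3)] coeff_low[OF assms(4-6)] by (simp add: poly_eq_iff)

lemma high_eq_if_Lam_AC:
  assumes "0 < r" "y \<le> r" "AC (Lam f g d lam r)" "0 < r'" "y \<le> r'" "AC (Lam f g d lam r')"
  shows "high r' = high r"
  using coeff_high[OF assms(1-3)] coeff_high[OF assms(4-6)] eps_eq_if_Lam_AC[OF assms(1,3,4,6)]
  by (simp add: poly_eq_iff)

lemma Lam_mult_A_decomposition_unique:
  assumes "0 < r" "y \<le> r" "AC (Lam f g d lam r)" "0 < r'" "y \<le> r'" "AC (Lam f g d lam r')"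
    and "Lam f g d lam r' * A y = p + monom c (d + y) * A (r' - y + 1) + monom 1 (d + r' + 1) * q"
    and "degree p < d + y"
  shows "p = low r \<and> q = high r"
proof -
  have "p = low r'" "q = high r'"
    using assms(5,7,8) eq_cutoff_block_shift_iff[of p "d + y" "r' - y + 1" "d + r' + 1"]
    by (simp_all add: low_def high_def)
  with low_eq_if_Lam_AC[OF assms(1-6)] high_eq_if_Lam_AC[OF assms(1-6)] show ?thesis
    by simp
qed

end

theorem proposition1p1:
  fixes f g :: "int poly" and d r y :: nat and lam :: int
  assumes f_AC: "AC f" and g_AC: "AC g"
    and f_deg: "degree f = d" and g_deg: "degree g = d"
    and r_pos: "r > 0"
    and L_AC: "AC (Lam f g d lam r)"
    and f_mono: "\<forall>j<d. \<bar>coeff f j\<bar> < \<bar>coeff f (j + 1)\<bar>"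
    and f_bound: "\<forall>j\<le>d. \<bar>coeff f j\<bar> < \<bar>lam\<bar>"
    and g_mono: "\<forall>j<d. \<bar>coeff g j\<bar> > \<bar>coeff g (j + 1)\<bar>"
    and g_bound: "\<forall>j\<le>d. \<bar>coeff g j\<bar> < \<bar>lam\<bar>"
    and y: "1 \<le> y" "y \<le> r"
  shows "AC (Lam f g d lam r * A y) \<and>
    (\<exists>fy gy.
       Lam f g d lam r * A y
         = fy + monom (- eps y * int y * lam) (d + y) * A (r - y + 1)
              + monom 1 (d + r + 1) * gy
     \<and> AC fy \<and> AC gy \<and> degree fy = d + y - 1 \<and> degree gy = d + y - 1
     \<and> (\<forall>j < d + y - 1. \<bar>coeff fy j\<bar> < \<bar>coeff fy (j + 1)\<bar>)
     \<and> (\<forall>j < d + y - 1. \<bar>coeff gy j\<bar> > \<bar>coeff gy (j + 1)\<bar>)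
     \<and> (\<forall>j \<le> d + y - 1. \<bar>coeff fy j\<bar> < \<bar>- eps y * int y * lam\<bar>)
     \<and> (\<forall>j \<le> d + y - 1. \<bar>coeff gy j\<bar> < \<bar>- eps y * int y * lam\<bar>)
     \<and> (\<forall>r' fy' gy'. r' > 0 \<and> y \<le> r' \<and> AC (Lam f g d lam r')
          \<and> Lam f g d lam r' * A y
              = fy' + monom (- eps y * int y * lam) (d + y) * A (r' - y + 1)
                   + monom 1 (d + r' + 1) * gy'
          \<and> degree fy' = d + y - 1 \<and> degree gy' = d + y - 1
          \<longrightarrow> gy' = gy \<and> (even r' = even r \<longrightarrow> fy' = fy)))"
proof -
  interpret AC_sandwich f g d y lam
    using f_AC g_AC f_deg g_deg f_mono f_bound g_mono g_bound y(1) by unfold_locales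
  note admissible = r_pos y(2) L_AC
  have abs_lam_y: "\<bar>- eps y * int y * lam\<bar> = int y * \<bar>lam\<bar>"
    by (simp add: abs_mult abs_eps)
  show ?thesis
    unfolding abs_lam_y
    by (rule conjI[OF AC_Lam_mult_A[OF admissible]], rule exI[of _ "low r"],
        rule exI[of _ "high r"])
      (use Lam_mult_A_decomposition[OF admissible] AC_low[OF admissible] AC_high[OF admissible]
        degree_low[OF admissible] degree_high[OF admissible]
        abs_coeff_low_strict_mono[OF admissible] abs_coeff_high_strict_antimono[OF admissible]
        abs_coeff_low_less[OF admissible] abs_coeff_high_less[OF admissible]
        Lam_mult_A_decomposition_unique[OF admissible] y(1) in auto)
qed

end
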